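(* The class of liberal extensions is Morita invariant: if $A/B$ is a liberal extension and $A/B$ is Morita equivalent to $A'/B'$, then $A'/B'$ is a liberal extension.
   Context: All rings have identity, subrings contain the identity, modules are unital; a ring extension $A/B$ means $B$ is a subring of $A$. $V_A(B)=\{a\in A\mid ba=ab \text{ for all } b\in B\}$. $A/B$ is a liberal extension if there are finitely many $v_1,\dots,v_n\in V_A(B)$ with $A=\sum_{i=1}^n v_iB$. For bimodules ${}_AX_{A'}$, ${}_AY_{A'}$, write $X\mid Y$ if $X$ is isomorphic to a direct summand of a finite direct sum of copies of $Y$, and $X\sim Y$ if $X\mid Y$ and $Y\mid X$. $\mathrm{End}^r({}_AM)$ denotes the ring of left $A$-endomorphisms of $M$ acting on the right. A bimodule ${}_AM_{A'}$ is a Morita module if ${}_AM\sim{}_AA$ and $\mathrm{End}^r({}_AM)=A'$. Ring extensions $A/B$ and $A'/B'$ are Morita equivalent if there exist Morita modules ${}_AM_{A'}$ and ${}_BN_{B'}$ with ${}_AA\otimes_BN_{B'}\cong{}_AM_{B'}$. A class $\mathscr C$ of ring extensions is Morita invariant if whenever $A/B\in\mathscr C$ and $A/B$ is Morita equivalent to $A'/B'$, then $A'/B'\in\mathscr C$. *)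

theory Defs
  imports Main "HOL-Library.Poly_Mapping"
begin

(* Rings are types of class ring_1 (the ring A is UNIV of its type);
  subrings are sets. Modules are given by a carrier set inside an
  ab_group_add type together with an action. *)

definition subring :: "'a::ring_1 set \<Rightarrow> bool" where
  "subring B \<longleftrightarrow> 1 \<in> B \<and> (\<forall>x\<in>B. \<forall>y\<in>B. x + y \<in> B \<and> x * y \<in> B \<and> - x \<in> B)"

definition centralizer :: "'a::ring_1 set \<Rightarrow> 'a set" where
  "centralizer B = {a. \<forall>b\<in>B. b * a = a * b}"

definition liberal_ext :: "'a::ring_1 set \<Rightarrow> bool" where
  "liberal_ext B \<longleftrightarrow> subring B \<and>
     (\<exists>vs :: 'a list. set vs \<subseteq> centralizer B \<and>
        (\<forall>a. \<exists>bs. length bs = length vs \<and> set bs \<subseteq> B \<and>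
                 a = (\<Sum>i<length vs. vs ! i * bs ! i)))"

definition lmodule :: "'r::ring_1 set \<Rightarrow> 'm::ab_group_add set \<Rightarrow> ('r \<Rightarrow> 'm \<Rightarrow> 'm) \<Rightarrow> bool" where
  "lmodule R C act \<longleftrightarrow>
     0 \<in> C \<and> (\<forall>x\<in>C. \<forall>y\<in>C. x + y \<in> C \<and> - x \<in> C) \<and>
     (\<forall>r\<in>R. \<forall>x\<in>C. act r x \<in> C) \<and>
     (\<forall>r\<in>R. \<forall>x\<in>C. \<forall>y\<in>C. act r (x + y) = act r x + act r y) \<and>
     (\<forall>r\<in>R. \<forall>s\<in>R. \<forall>x\<in>C. act (r + s) x = act r x + act s x \<and> act (r * s) x = act r (act s x)) \<and>
     (\<forall>x\<in>C. act 1 x = x)"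

definition rmodule :: "'s::ring_1 set \<Rightarrow> 'm::ab_group_add set \<Rightarrow> ('m \<Rightarrow> 's \<Rightarrow> 'm) \<Rightarrow> bool" where
  "rmodule S C act \<longleftrightarrow>
     0 \<in> C \<and> (\<forall>x\<in>C. \<forall>y\<in>C. x + y \<in> C \<and> - x \<in> C) \<and>
     (\<forall>s\<in>S. \<forall>x\<in>C. act x s \<in> C) \<and>
     (\<forall>s\<in>S. \<forall>x\<in>C. \<forall>y\<in>C. act (x + y) s = act x s + act y s) \<and>
     (\<forall>s\<in>S. \<forall>t\<in>S. \<forall>x\<in>C. act x (s + t) = act x s + act x t \<and> act x (s * t) = act (act x s) t) \<and>
     (\<forall>x\<in>C. act x 1 = x)"

definition bimodule :: "'r::ring_1 set \<Rightarrow> 's::ring_1 set \<Rightarrow> 'm::ab_group_add set \<Rightarrow>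
    ('r \<Rightarrow> 'm \<Rightarrow> 'm) \<Rightarrow> ('m \<Rightarrow> 's \<Rightarrow> 'm) \<Rightarrow> bool" where
  "bimodule R S C l r \<longleftrightarrow> lmodule R C l \<and> rmodule S C r \<and>
     (\<forall>a\<in>R. \<forall>s\<in>S. \<forall>x\<in>C. l a (r x s) = r (l a x) s)"

definition lmod_hom :: "'r::ring_1 set \<Rightarrow> 'x::ab_group_add set \<Rightarrow> ('r \<Rightarrow> 'x \<Rightarrow> 'x) \<Rightarrow>
    'y::ab_group_add set \<Rightarrow> ('r \<Rightarrow> 'y \<Rightarrow> 'y) \<Rightarrow> ('x \<Rightarrow> 'y) \<Rightarrow> bool" where
  "lmod_hom R CX aX CY aY f \<longleftrightarrow> f ` CX \<subseteq> CY \<and>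
     (\<forall>x\<in>CX. \<forall>y\<in>CX. f (x + y) = f x + f y) \<and>
     (\<forall>r\<in>R. \<forall>x\<in>CX. f (aX r x) = aY r (f x))"

definition dsum_carrier :: "nat \<Rightarrow> 'y::ab_group_add set \<Rightarrow> (nat \<Rightarrow> 'y) set" where
  "dsum_carrier k CY = {v. \<forall>i. (i < k \<longrightarrow> v i \<in> CY) \<and> (k \<le> i \<longrightarrow> v i = 0)}"

(* X | Y for left modules: X is isomorphic to a direct summand of Y^k for some k,
  i.e. there is a split monomorphism f : X \<rightarrow> Y^k with retraction g. *)
definition lmod_divides :: "'r::ring_1 set \<Rightarrow> 'x::ab_group_add set \<Rightarrow> ('r \<Rightarrow> 'x \<Rightarrow> 'x) \<Rightarrow>
    'y::ab_group_add set \<Rightarrow> ('r \<Rightarrow> 'y \<Rightarrow> 'y) \<Rightarrow> bool" where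
  "lmod_divides R CX aX CY aY \<longleftrightarrow>
     (\<exists>(k::nat) (f :: 'x \<Rightarrow> nat \<Rightarrow> 'y) (g :: (nat \<Rightarrow> 'y) \<Rightarrow> 'x).
        f ` CX \<subseteq> dsum_carrier k CY \<and>
        (\<forall>x\<in>CX. \<forall>y\<in>CX. f (x + y) = (\<lambda>i. f x i + f y i)) \<and>
        (\<forall>r\<in>R. \<forall>x\<in>CX. f (aX r x) = (\<lambda>i. aY r (f x i))) \<and>
        g ` dsum_carrier k CY \<subseteq> CX \<and>
        (\<forall>v\<in>dsum_carrier k CY. \<forall>w\<in>dsum_carrier k CY. g (\<lambda>i. v i + w i) = g v + g w) \<and>
        (\<forall>r\<in>R. \<forall>v\<in>dsum_carrier k CY. g (\<lambda>i. aY r (v i)) = aX r (g v)) \<and>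
        (\<forall>x\<in>CX. g (f x) = x))"

definition lmod_sim :: "'r::ring_1 set \<Rightarrow> 'x::ab_group_add set \<Rightarrow> ('r \<Rightarrow> 'x \<Rightarrow> 'x) \<Rightarrow>
    'y::ab_group_add set \<Rightarrow> ('r \<Rightarrow> 'y \<Rightarrow> 'y) \<Rightarrow> bool" where
  "lmod_sim R CX aX CY aY \<longleftrightarrow> lmod_divides R CX aX CY aY \<and> lmod_divides R CY aY CX aX"

(* Morita module _R M_S (R, S rings given as sets, M with carrier C):
  _R M \<sim> _R R and End^r(_R M) = S, the identification being via the right S-action,
  i.e. s \<mapsto> (x \<mapsto> x s) is a bijection from S onto the left R-endomorphisms of M. *)
definition morita_module :: "'r::ring_1 set \<Rightarrow> 's::ring_1 set \<Rightarrow> 'm::ab_group_add set \<Rightarrow>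
    ('r \<Rightarrow> 'm \<Rightarrow> 'm) \<Rightarrow> ('m \<Rightarrow> 's \<Rightarrow> 'm) \<Rightarrow> bool" where
  "morita_module R S C l r \<longleftrightarrow> bimodule R S C l r \<and>
     lmod_sim R C l R (\<lambda>a b. a * b) \<and>
     (\<forall>s\<in>S. \<forall>t\<in>S. (\<forall>x\<in>C. r x s = r x t) \<longrightarrow> s = t) \<and>
     (\<forall>f. lmod_hom R C l C l f \<longrightarrow> (\<exists>s\<in>S. \<forall>x\<in>C. f x = r x s))"

(* Tensor product A \<otimes>_B N (A = UNIV :: 'a, N = UNIV :: 'n with left B-action lN):
  the free abelian group on A \<times> N, ('a \<times> 'n) \<Rightarrow>\<^sub>0 int, modulo the subgroup generated by
  the bilinearity and B-balancedness relations. *)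
inductive_set tensor_rel :: "'a::ring_1 set \<Rightarrow> ('a \<Rightarrow> 'n::ab_group_add \<Rightarrow> 'n) \<Rightarrow> (('a \<times> 'n) \<Rightarrow>\<^sub>0 int) set"
  for B :: "'a set" and lN :: "'a \<Rightarrow> 'n \<Rightarrow> 'n" where
  zero: "0 \<in> tensor_rel B lN"
| addL: "frag_of (a + a', n) - frag_of (a, n) - frag_of (a', n) \<in> tensor_rel B lN"
| addR: "frag_of (a, n + n') - frag_of (a, n) - frag_of (a, n') \<in> tensor_rel B lN"
| bal: "b \<in> B \<Longrightarrow> frag_of (a * b, n) - frag_of (a, lN b n) \<in> tensor_rel B lN"
| plus: "x \<in> tensor_rel B lN \<Longrightarrow> y \<in> tensor_rel B lN \<Longrightarrow> x + y \<in> tensor_rel B lN"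
| neg: "x \<in> tensor_rel B lN \<Longrightarrow> - x \<in> tensor_rel B lN"

(* _A A \<otimes>_B N_{B'} \<cong> _A M_{B'} as A-B'-bimodules: an additive map from the free abelian
  group onto M whose kernel is exactly the relation subgroup (so it induces a group
  isomorphism (A \<otimes>_B N) \<cong> M), compatible with the left A-action
  a0 (a \<otimes> n) = (a0 a) \<otimes> n and the right B'-action (a \<otimes> n) b' = a \<otimes> (n b'). *)
definition tensor_iso :: "'a::ring_1 set \<Rightarrow> 'b::ring_1 set \<Rightarrow>
    ('a \<Rightarrow> 'n::ab_group_add \<Rightarrow> 'n) \<Rightarrow> ('n \<Rightarrow> 'b \<Rightarrow> 'n) \<Rightarrow>
    ('a \<Rightarrow> 'm::ab_group_add \<Rightarrow> 'm) \<Rightarrow> ('m \<Rightarrow> 'b \<Rightarrow> 'm) \<Rightarrow> bool" where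
  "tensor_iso B B' lN rN lM rM \<longleftrightarrow>
     (\<exists>\<Phi> :: (('a \<times> 'n) \<Rightarrow>\<^sub>0 int) \<Rightarrow> 'm.
        (\<forall>x y. \<Phi> (x + y) = \<Phi> x + \<Phi> y) \<and>
        surj \<Phi> \<and>
        {x. \<Phi> x = 0} = tensor_rel B lN \<and>
        (\<forall>a0 x. \<Phi> (frag_extend (\<lambda>(a, n). frag_of (a0 * a, n)) x) = lM a0 (\<Phi> x)) \<and>
        (\<forall>b'\<in>B'. \<forall>x. \<Phi> (frag_extend (\<lambda>(a, n). frag_of (a, rN n b')) x) = rM (\<Phi> x) b'))"

(* A/B and A'/B' are Morita equivalent via the Morita modules _A M_{A'} and _B N_{B'}
  (A = UNIV :: 'a, A' = UNIV :: 'b, M = UNIV :: 'm, N = UNIV :: 'n). *)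
definition morita_equivalent_via :: "'a::ring_1 set \<Rightarrow> 'b::ring_1 set \<Rightarrow>
    ('a \<Rightarrow> 'm::ab_group_add \<Rightarrow> 'm) \<Rightarrow> ('m \<Rightarrow> 'b \<Rightarrow> 'm) \<Rightarrow>
    ('a \<Rightarrow> 'n::ab_group_add \<Rightarrow> 'n) \<Rightarrow> ('n \<Rightarrow> 'b \<Rightarrow> 'n) \<Rightarrow> bool" where
  "morita_equivalent_via B B' lM rM lN rN \<longleftrightarrow>
     morita_module (UNIV :: 'a set) (UNIV :: 'b set) (UNIV :: 'm set) lM rM \<and>
     morita_module B B' (UNIV :: 'n set) lN rN \<and>
     tensor_iso B B' lN rN lM rM"

end

theory Submission
  imports Defs "HOL.Modules"
begin

text \<open>
  Write \<open>M \<cong> A \<otimes>\<^sub>B N\<close> and \<open>A = \<Sum> v\<^sub>i B\<close> with \<open>v\<^sub>i \<in> V\<^sub>A(B)\<close>.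
  Right multiplication \<open>a \<otimes> n \<mapsto> a v\<^sub>i \<otimes> n\<close> is well defined because \<open>v\<^sub>i\<close> commutes
  with \<open>B\<close>, and it is left \<open>A\<close>-linear, so it is the action of some \<open>w\<^sub>i \<in> A' = End(\<^sub>AM)\<close>;
  as \<open>B'\<close> acts on the factor \<open>N\<close> only, \<open>w\<^sub>i\<close> commutes with \<open>B'\<close>.
  Given \<open>a' \<in> A'\<close>, the map \<open>n \<mapsto> (1 \<otimes> n) a'\<close> is left \<open>B\<close>-linear from \<open>N\<close> to
  \<open>M = \<Sum> v\<^sub>i \<otimes> N\<close>. Since \<open>N\<close> is a direct summand of some \<open>B\<^sup>k\<close>, a dual basis of \<open>N\<close>
  turns it into \<open>\<Sum> v\<^sub>i \<otimes> G\<^sub>i(n)\<close> with \<open>G\<^sub>i \<in> End(\<^sub>BN) = B'\<close>, say \<open>G\<^sub>i = s\<^sub>i\<close>.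
  Then \<open>a'\<close> and \<open>\<Sum> w\<^sub>i s\<^sub>i\<close> agree on all pure tensors, so \<open>a' = \<Sum> w\<^sub>i s\<^sub>i\<close>
  because \<open>A'\<close> acts faithfully on \<open>M\<close>.
\<close>

lemma subring_zero: "subring B \<Longrightarrow> 0 \<in> B"
  unfolding subring_def by (metis add.right_inverse)

definition right_generators :: "'a::ring_1 set \<Rightarrow> 'a list \<Rightarrow> bool" where
  "right_generators B vs \<longleftrightarrow>
     (\<forall>a. \<exists>bs. length bs = length vs \<and> set bs \<subseteq> B \<and> a = (\<Sum>i<length vs. vs ! i * bs ! i))"

lemma liberal_ext_iff:
  "liberal_ext B \<longleftrightarrow> subring B \<and> (\<exists>vs. set vs \<subseteq> centralizer B \<and> right_generators B vs)"
  by (simp add: liberal_ext_def right_generators_def)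

lemma dsum_carrier_additive_sum:
  fixes g :: "(nat \<Rightarrow> 'y::ab_group_add) \<Rightarrow> 'x::ab_group_add"
  assumes zero: "0 \<in> C" and add: "\<And>x y. x \<in> C \<Longrightarrow> y \<in> C \<Longrightarrow> x + y \<in> C"
    and g_add: "\<forall>v\<in>dsum_carrier k C. \<forall>w\<in>dsum_carrier k C. g (\<lambda>i. v i + w i) = g v + g w"
    and "finite J" and F: "\<And>j. j \<in> J \<Longrightarrow> F j \<in> dsum_carrier k C"
  shows "(\<lambda>i. \<Sum>j\<in>J. F j i) \<in> dsum_carrier k C \<and> g (\<lambda>i. \<Sum>j\<in>J. F j i) = (\<Sum>j\<in>J. g (F j))"
  using \<open>finite J\<close> F
proof (induction J rule: finite_induct)
  case empty
  have zero_in: "(\<lambda>_. 0) \<in> dsum_carrier k C"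
    using zero by (simp add: dsum_carrier_def)
  have "g (\<lambda>_. 0) = 0"
    using g_add[rule_format, OF zero_in zero_in] by simp
  with zero_in show ?case by simp
next
  case (insert j J)
  then have sum_in: "(\<lambda>i. \<Sum>j\<in>J. F j i) \<in> dsum_carrier k C"
    and g_sum: "g (\<lambda>i. \<Sum>j\<in>J. F j i) = (\<Sum>j\<in>J. g (F j))"
    and F_in: "F j \<in> dsum_carrier k C" by auto
  have split: "(\<lambda>i. \<Sum>j\<in>insert j J. F j i) = (\<lambda>i. F j i + (\<Sum>j\<in>J. F j i))"
    using insert.hyps by simp
  have "(\<lambda>i. F j i + (\<Sum>j\<in>J. F j i)) \<in> dsum_carrier k C"
    using sum_in F_in add by (auto simp: dsum_carrier_def)
  moreover have "g (\<lambda>i. F j i + (\<Sum>j\<in>J. F j i)) = g (F j) + (\<Sum>j\<in>J. g (F j))"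
    using g_add F_in sum_in g_sum by simp
  ultimately show ?case
    using insert.hyps by (simp add: split)
qed

lemma lmod_divides_ring_dual_basis:
  fixes act :: "'r::ring_1 \<Rightarrow> 'x::ab_group_add \<Rightarrow> 'x"
  assumes R: "subring R" and "lmod_divides R C act R (\<lambda>a b. a * b)"
  obtains k and c :: "'x \<Rightarrow> nat \<Rightarrow> 'r" and e :: "nat \<Rightarrow> 'x" where
    "\<And>x j. x \<in> C \<Longrightarrow> c x j \<in> R"
    "\<And>x y. x \<in> C \<Longrightarrow> y \<in> C \<Longrightarrow> c (x + y) = (\<lambda>j. c x j + c y j)"
    "\<And>r x. r \<in> R \<Longrightarrow> x \<in> C \<Longrightarrow> c (act r x) = (\<lambda>j. r * c x j)"
    "\<And>j. j < k \<Longrightarrow> e j \<in> C"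
    "\<And>x. x \<in> C \<Longrightarrow> (\<Sum>j<k. act (c x j) (e j)) = x"
proof -
  obtain k and f :: "'x \<Rightarrow> nat \<Rightarrow> 'r" and g :: "(nat \<Rightarrow> 'r) \<Rightarrow> 'x" where
    f_in: "f ` C \<subseteq> dsum_carrier k R" and
    f_add: "\<forall>x\<in>C. \<forall>y\<in>C. f (x + y) = (\<lambda>i. f x i + f y i)" and
    f_lin: "\<forall>r\<in>R. \<forall>x\<in>C. f (act r x) = (\<lambda>i. r * f x i)" and
    g_in: "g ` dsum_carrier k R \<subseteq> C" and
    g_add: "\<forall>v\<in>dsum_carrier k R. \<forall>w\<in>dsum_carrier k R. g (\<lambda>i. v i + w i) = g v + g w" and
    g_lin: "\<forall>r\<in>R. \<forall>v\<in>dsum_carrier k R. g (\<lambda>i. r * v i) = act r (g v)" and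
    gf: "\<forall>x\<in>C. g (f x) = x"
    using assms(2) unfolding lmod_divides_def by (elim exE conjE) (rule that; assumption)
  have R01: "0 \<in> R" "1 \<in> R" and R_add: "\<And>x y. x \<in> R \<Longrightarrow> y \<in> R \<Longrightarrow> x + y \<in> R"
    using R subring_zero by (auto simp: subring_def)
  define u :: "nat \<Rightarrow> nat \<Rightarrow> 'r" where "u j = (\<lambda>i. if i = j then 1 else 0)" for j
  have u_in: "u j \<in> dsum_carrier k R" if "j < k" for j
    using that R01 by (auto simp: u_def dsum_carrier_def)
  have g_expand: "g v = (\<Sum>j<k. act (v j) (g (u j)))" if v: "v \<in> dsum_carrier k R" for v
  proof -
    have vj: "v j \<in> R" if "j < k" for j
      using v that by (auto simp: dsum_carrier_def)
    have terms: "(\<lambda>i. v j * u j i) \<in> dsum_carrier k R" if "j < k" for j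
      using that vj R01 by (auto simp: u_def dsum_carrier_def)
    have "v j * u j i = (if j = i then v i else 0)" for i j
      by (simp add: u_def)
    then have "v = (\<lambda>i. \<Sum>j<k. v j * u j i)"
      using v by (auto simp: dsum_carrier_def)
    then have "g v = (\<Sum>j<k. g (\<lambda>i. v j * u j i))"
      using dsum_carrier_additive_sum[OF R01(1) R_add g_add,
          where J = "{..<k}" and F = "\<lambda>j i. v j * u j i"] terms
      by simp
    also have "\<dots> = (\<Sum>j<k. act (v j) (g (u j)))"
      using g_lin vj u_in by simp
    finally show ?thesis .
  qed
  show thesis
  proof (rule that[of f k "\<lambda>j. g (u j)"])
    show "f x j \<in> R" if "x \<in> C" for x j
      using f_in that R01 by (cases "j < k") (auto simp: dsum_carrier_def)
    show "(\<Sum>j<k. act (f x j) (g (u j))) = x" if "x \<in> C" for x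
      using g_expand[of "f x"] f_in gf that by auto
  qed (use f_add f_lin g_in u_in in auto)
qed

definition frag_lmult :: "'a::ring_1 \<Rightarrow> (('a \<times> 'n) \<Rightarrow>\<^sub>0 int) \<Rightarrow> ('a \<times> 'n) \<Rightarrow>\<^sub>0 int" where
  "frag_lmult a0 = frag_extend (\<lambda>(a, n). frag_of (a0 * a, n))"

definition frag_rmult :: "'a::ring_1 \<Rightarrow> (('a \<times> 'n) \<Rightarrow>\<^sub>0 int) \<Rightarrow> ('a \<times> 'n) \<Rightarrow>\<^sub>0 int" where
  "frag_rmult v = frag_extend (\<lambda>(a, n). frag_of (a * v, n))"

lemma frag_rmult_lmult_commute: "frag_rmult v (frag_lmult a0 x) = frag_lmult a0 (frag_rmult v x)"
proof -
  have "Poly_Mapping.keys x \<subseteq> UNIV" by simp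
  then show ?thesis
  proof (induction x rule: frag_induction)
    case (one z)
    then show ?case by (cases z) (simp add: frag_rmult_def frag_lmult_def mult.assoc)
  qed (simp_all add: frag_rmult_def frag_lmult_def frag_extend_diff)
qed

lemma tensor_rel_frag_rmult:
  assumes v: "v \<in> centralizer B" and x: "x \<in> tensor_rel B lN"
  shows "frag_rmult v x \<in> tensor_rel B lN"
  using x
proof induction
  case (addL a a' n)
  show ?case by (simp add: frag_rmult_def frag_extend_diff distrib_right tensor_rel.addL)
next
  case (bal b a n)
  have "a * b * v = a * v * b"
    using v bal by (auto simp: centralizer_def mult.assoc)
  with bal show ?case by (simp add: frag_rmult_def frag_extend_diff tensor_rel.bal)
qed (simp_all add: frag_rmult_def frag_extend_diff frag_extend_add frag_extend_minus tensor_rel.intros)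

locale tensor_repr = Phi: additive Phi
  for Phi :: "(('a::ring_1 \<times> 'n::ab_group_add) \<Rightarrow>\<^sub>0 int) \<Rightarrow> 'm::ab_group_add" +
  fixes B :: "'a set" and B' :: "'b::ring_1 set"
    and lN :: "'a \<Rightarrow> 'n \<Rightarrow> 'n" and rN :: "'n \<Rightarrow> 'b \<Rightarrow> 'n"
    and lM :: "'a \<Rightarrow> 'm \<Rightarrow> 'm" and rM :: "'m \<Rightarrow> 'b \<Rightarrow> 'm"
  assumes Phi_surj: "surj Phi"
    and Phi_eq_0_iff: "Phi x = 0 \<longleftrightarrow> x \<in> tensor_rel B lN"
    and Phi_frag_lmult: "Phi (frag_lmult a0 x) = lM a0 (Phi x)"
    and Phi_rmult: "b' \<in> B' \<Longrightarrow> Phi (frag_extend (\<lambda>(a, n). frag_of (a, rN n b')) x) = rM (Phi x) b'"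

lemma tensor_iso_tensor_repr:
  "tensor_iso B B' lN rN lM rM \<Longrightarrow> \<exists>Phi. tensor_repr Phi B B' lN rN lM rM"
  unfolding tensor_iso_def tensor_repr_def tensor_repr_axioms_def additive_def frag_lmult_def
  by blast

context tensor_repr
begin

lemma Phi_frag_rmult_cong:
  assumes "v \<in> centralizer B" and "Phi x = Phi y"
  shows "Phi (frag_rmult v x) = Phi (frag_rmult v y)"
proof -
  have "x - y \<in> tensor_rel B lN"
    using assms(2) Phi_eq_0_iff[of "x - y"] by (simp add: Phi.diff)
  then have "Phi (frag_rmult v (x - y)) = 0"
    using tensor_rel_frag_rmult[OF assms(1)] Phi_eq_0_iff by blast
  then show ?thesis
    by (simp add: frag_rmult_def frag_extend_diff Phi.diff)
qed

definition tens :: "'a \<Rightarrow> 'n \<Rightarrow> 'm" where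
  "tens a n = Phi (frag_of (a, n))"

lemma additive_tens_left: "additive (\<lambda>a. tens a n)"
proof
  show "tens (a + a') n = tens a n + tens a' n" for a a'
    using Phi_eq_0_iff[of "frag_of (a + a', n) - frag_of (a, n) - frag_of (a', n)"]
    by (simp add: tens_def Phi.diff tensor_rel.addL diff_eq_eq)
qed

lemma additive_tens: "additive (tens a)"
proof
  show "tens a (n + n') = tens a n + tens a n'" for n n'
    using Phi_eq_0_iff[of "frag_of (a, n + n') - frag_of (a, n) - frag_of (a, n')"]
    by (simp add: tens_def Phi.diff tensor_rel.addR diff_eq_eq)
qed

lemma tens_balanced: "b \<in> B \<Longrightarrow> tens (a * b) n = tens a (lN b n)"
  using Phi_eq_0_iff[of "frag_of (a * b, n) - frag_of (a, lN b n)"]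
  by (simp add: tens_def Phi.diff tensor_rel.bal)

lemma lM_tens: "lM a0 (tens a n) = tens (a0 * a) n"
  using Phi_frag_lmult[of a0 "frag_of (a, n)"] by (simp add: tens_def frag_lmult_def)

lemma rM_tens: "b' \<in> B' \<Longrightarrow> rM (tens a n) b' = tens a (rN n b')"
  using Phi_rmult[of b' "frag_of (a, n)"] by (simp add: tens_def)

lemma tens_induct [case_names zero tens diff]:
  assumes "P 0" and "\<And>a n. P (tens a n)" and "\<And>x y. P x \<Longrightarrow> P y \<Longrightarrow> P (x - y)"
  shows "P m"
proof -
  obtain x where m: "m = Phi x"
    using Phi_surj by (metis surjD)
  have "Poly_Mapping.keys x \<subseteq> UNIV" by simp
  then have "P (Phi x)"
  proof (induction x rule: frag_induction)
    case (one z)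
    then show ?case using assms(2) by (cases z) (simp add: tens_def)
  qed (use assms(1,3) in \<open>simp_all add: Phi.zero Phi.diff\<close>)
  with m show ?thesis by simp
qed

lemma tens_span:
  assumes "right_generators B vs"
  shows "\<exists>ns. m = (\<Sum>i<length vs. tens (vs ! i) (ns i))"
proof (induction m rule: tens_induct)
  case zero
  show ?case
    by (rule exI[of _ "\<lambda>_. 0"]) (simp add: additive.zero[OF additive_tens])
next
  case (tens a n)
  obtain bs where bs: "length bs = length vs" "set bs \<subseteq> B" "a = (\<Sum>i<length vs. vs ! i * bs ! i)"
    using assms by (auto simp: right_generators_def)
  have "tens a n = (\<Sum>i<length vs. tens (vs ! i * bs ! i) n)"
    using bs(3) additive.sum[OF additive_tens_left] by metis
  also have "\<dots> = (\<Sum>i<length vs. tens (vs ! i) (lN (bs ! i) n))"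
    using bs(1,2) by (intro sum.cong) (auto intro!: tens_balanced)
  finally show ?case by (intro exI[of _ "\<lambda>i. lN (bs ! i) n"])
next
  case (diff x y)
  then obtain n1 n2 where "x = (\<Sum>i<length vs. tens (vs ! i) (n1 i))" "y = (\<Sum>i<length vs. tens (vs ! i) (n2 i))"
    by blast
  then have "x - y = (\<Sum>i<length vs. tens (vs ! i) (n1 i - n2 i))"
    by (simp add: additive.diff[OF additive_tens] sum_subtractf)
  then show ?case by (intro exI[of _ "\<lambda>i. n1 i - n2 i"])
qed

definition acts_as_rmult :: "'b \<Rightarrow> 'a \<Rightarrow> bool" where
  "acts_as_rmult w v \<longleftrightarrow> (\<forall>a n. rM (tens a n) w = tens (a * v) n)"

lemma right_mult_endomorphism:
  assumes v: "v \<in> centralizer B"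
  shows "\<exists>\<phi>. lmod_hom UNIV UNIV lM UNIV lM \<phi> \<and> (\<forall>a n. \<phi> (tens a n) = tens (a * v) n)"
proof -
  define \<phi> where "\<phi> = Phi \<circ> frag_rmult v \<circ> inv Phi"
  have \<phi>_Phi: "\<phi> (Phi x) = Phi (frag_rmult v x)" for x
  proof -
    have "Phi (inv Phi (Phi x)) = Phi x"
      using Phi_surj by (simp add: surj_f_inv_f)
    from Phi_frag_rmult_cong[OF v this] show ?thesis
      unfolding \<phi>_def by simp
  qed
  have "\<phi> (m1 + m2) = \<phi> m1 + \<phi> m2" for m1 m2
  proof -
    obtain x1 x2 where "m1 = Phi x1" "m2 = Phi x2"
      using Phi_surj by (metis surjD)
    then show ?thesis
      by (simp flip: Phi.add add: \<phi>_Phi frag_rmult_def frag_extend_add)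
  qed
  moreover have "\<phi> (lM a0 m) = lM a0 (\<phi> m)" for a0 m
  proof -
    obtain x where "m = Phi x"
      using Phi_surj by (metis surjD)
    then show ?thesis
      by (simp flip: Phi_frag_lmult add: \<phi>_Phi frag_rmult_lmult_commute)
  qed
  moreover have "\<phi> (tens a n) = tens (a * v) n" for a n
    by (simp add: tens_def \<phi>_Phi frag_rmult_def)
  ultimately show ?thesis
    by (auto simp: lmod_hom_def)
qed

end

locale morita_tensor_repr = tensor_repr +
  assumes B_subring: "subring B"
    and M_morita: "morita_module UNIV UNIV UNIV lM rM"
    and N_morita: "morita_module B B' UNIV lN rN"

lemma morita_equivalent_via_tensor_repr:
  "subring B \<Longrightarrow> morita_equivalent_via B B' lM rM lN rN \<Longrightarrow>
    \<exists>Phi. morita_tensor_repr Phi B B' lN rN lM rM"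
  using tensor_iso_tensor_repr
  by (fastforce simp: morita_equivalent_via_def morita_tensor_repr_def morita_tensor_repr_axioms_def)

context morita_tensor_repr
begin

lemma additive_lM: "additive (lM a)"
  and additive_rM: "additive (\<lambda>x. rM x s)"
  and additive_rM_right: "additive (rM x)"
  using M_morita by (simp_all add: additive_def morita_module_def bimodule_def lmodule_def rmodule_def)

lemma rM_mult: "rM x (s * t) = rM (rM x s) t"
  and lM_rM_commute: "lM a (rM x s) = rM (lM a x) s"
  using M_morita by (simp_all add: morita_module_def bimodule_def rmodule_def)

lemma rM_faithful: "(\<And>x. rM x s = rM x t) \<Longrightarrow> s = t"
  using M_morita by (simp add: morita_module_def)

lemma M_endomorphism: "lmod_hom UNIV UNIV lM UNIV lM f \<Longrightarrow> \<exists>s. \<forall>x. f x = rM x s"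
  using M_morita by (simp add: morita_module_def)

lemma additive_lN: "b \<in> B \<Longrightarrow> additive (lN b)"
  and lN_add_left: "b \<in> B \<Longrightarrow> c \<in> B \<Longrightarrow> lN (b + c) x = lN b x + lN c x"
  and lN_mult: "b \<in> B \<Longrightarrow> c \<in> B \<Longrightarrow> lN (b * c) x = lN b (lN c x)"
  using N_morita by (simp_all add: additive_def morita_module_def bimodule_def lmodule_def)

lemma N_endomorphism: "lmod_hom B UNIV lN UNIV lN f \<Longrightarrow> \<exists>s\<in>B'. \<forall>x. f x = rN x s"
  using N_morita by (simp add: morita_module_def)

lemma N_dual_basis:
  obtains c e and k :: nat where "\<And>x j. c x j \<in> B"
    and "\<And>x y. c (x + y) = (\<lambda>j. c x j + c y j)"
    and "\<And>b x. b \<in> B \<Longrightarrow> c (lN b x) = (\<lambda>j. b * c x j)"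
    and "\<And>x. (\<Sum>j<k. lN (c x j) (e j)) = x"
proof -
  have "lmod_divides B UNIV lN B (\<lambda>a b. a * b)"
    using N_morita by (simp add: morita_module_def lmod_sim_def)
  then show thesis
  proof (rule lmod_divides_ring_dual_basis[OF B_subring])
    fix k :: nat and c e
    assume "\<And>x j. x \<in> UNIV \<Longrightarrow> c x j \<in> B"
      and "\<And>x y. x \<in> UNIV \<Longrightarrow> y \<in> UNIV \<Longrightarrow> c (x + y) = (\<lambda>j. c x j + c y j)"
      and "\<And>b x. b \<in> B \<Longrightarrow> x \<in> UNIV \<Longrightarrow> c (lN b x) = (\<lambda>j. b * c x j)"
      and "\<And>x. x \<in> UNIV \<Longrightarrow> (\<Sum>j<k. lN (c x j) (e j)) = x"
    then show thesis
      by (intro that[of c e k]) simp_all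
  qed
qed

lemma right_action_eqI:
  assumes "\<And>a n. rM (tens a n) s = rM (tens a n) t"
  shows "s = t"
proof (rule rM_faithful)
  show "rM x s = rM x t" for x
    by (induction x rule: tens_induct)
      (simp_all add: assms additive.zero[OF additive_rM] additive.diff[OF additive_rM])
qed

lemma centralizer_lift:
  assumes "v \<in> centralizer B"
  shows "\<exists>w. acts_as_rmult w v"
proof -
  obtain \<phi> where "lmod_hom UNIV UNIV lM UNIV lM \<phi>"
    and \<phi>: "\<And>a n. \<phi> (tens a n) = tens (a * v) n"
    using right_mult_endomorphism[OF assms] by blast
  then obtain w where "\<And>x. \<phi> x = rM x w"
    using M_endomorphism by blast
  with \<phi> show ?thesis
    unfolding acts_as_rmult_def by metis
qed

lemma acts_as_rmult_centralizer:
  assumes "acts_as_rmult w v"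
  shows "w \<in> centralizer B'"
  unfolding centralizer_def
proof (intro CollectI ballI)
  fix b assume "b \<in> B'"
  then show "b * w = w * b"
    using assms by (intro right_action_eqI) (simp add: acts_as_rmult_def rM_mult rM_tens)
qed

lemma B_linear_map_tens_decomp:
  assumes vs: "set vs \<subseteq> centralizer B" "right_generators B vs"
    and h: "additive h"
    and h_lin: "\<And>b n. b \<in> B \<Longrightarrow> h (lN b n) = lM b (h n)"
  obtains G where "\<And>i. lmod_hom B UNIV lN UNIV lN (G i)"
    and "\<And>n. h n = (\<Sum>i<length vs. tens (vs ! i) (G i n))"
proof -
  let ?L = "length vs"
  obtain c e and k :: nat where c_in: "\<And>x j. c x j \<in> B"
    and c_add: "\<And>x y. c (x + y) = (\<lambda>j. c x j + c y j)"
    and c_lin: "\<And>b x. b \<in> B \<Longrightarrow> c (lN b x) = (\<lambda>j. b * c x j)"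
    and dual_basis: "\<And>x. (\<Sum>j<k. lN (c x j) (e j)) = x"
    by (rule N_dual_basis) blast
  have "\<forall>j. \<exists>ns. h (e j) = (\<Sum>i<?L. tens (vs ! i) (ns i))"
    using tens_span[OF vs(2)] by blast
  then obtain ns where ns: "\<And>j. h (e j) = (\<Sum>i<?L. tens (vs ! i) (ns j i))"
    by metis
  define G where "G i n = (\<Sum>j<k. lN (c n j) (ns j i))" for i n
  have "lmod_hom B UNIV lN UNIV lN (G i)" for i
    unfolding lmod_hom_def
  proof (intro conjI ballI)
    show "G i (x + y) = G i x + G i y" for x y
      by (simp add: G_def c_add c_in lN_add_left sum.distrib)
    show "G i (lN b x) = lN b (G i x)" if "b \<in> B" for b x
      using that by (simp add: G_def c_lin c_in lN_mult additive.sum[OF additive_lN])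
  qed simp
  moreover have "h n = (\<Sum>i<?L. tens (vs ! i) (G i n))" for n
  proof -
    have central: "b * vs ! i = vs ! i * b" if "b \<in> B" "i < ?L" for b i
      using vs(1) that nth_mem by (fastforce simp: centralizer_def)
    have "h n = h (\<Sum>j<k. lN (c n j) (e j))"
      by (simp add: dual_basis)
    also have "\<dots> = (\<Sum>j<k. lM (c n j) (h (e j)))"
      by (simp add: additive.sum[OF h] h_lin c_in)
    also have "\<dots> = (\<Sum>j<k. \<Sum>i<?L. tens (c n j * vs ! i) (ns j i))"
      by (simp add: ns additive.sum[OF additive_lM] lM_tens)
    also have "\<dots> = (\<Sum>j<k. \<Sum>i<?L. tens (vs ! i) (lN (c n j) (ns j i)))"
      by (intro sum.cong refl) (simp add: central c_in tens_balanced)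
    also have "\<dots> = (\<Sum>i<?L. tens (vs ! i) (G i n))"
      by (subst sum.swap) (simp add: G_def additive.sum[OF additive_tens])
    finally show ?thesis .
  qed
  ultimately show thesis
    using that by blast
qed

lemma lifts_right_generators:
  assumes vs: "set vs \<subseteq> centralizer B" "right_generators B vs"
    and W: "\<And>i. i < length vs \<Longrightarrow> acts_as_rmult (W i) (vs ! i)"
  shows "right_generators B' (map W [0..<length vs])"
  unfolding right_generators_def
proof
  fix a'
  define h where "h n = rM (tens 1 n) a'" for n
  have h: "additive h"
    unfolding h_def
    by (simp add: additive_def additive.add[OF additive_tens] additive.add[OF additive_rM])
  have h_lin: "h (lN b n) = lM b (h n)" if "b \<in> B" for b n
    using that by (simp add: h_def lM_rM_commute lM_tens flip: tens_balanced)
  obtain G where G_hom: "\<And>i. lmod_hom B UNIV lN UNIV lN (G i)"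
    and h_decomp: "\<And>n. h n = (\<Sum>i<length vs. tens (vs ! i) (G i n))"
    using B_linear_map_tens_decomp[OF vs h h_lin] by blast
  have "\<forall>i. \<exists>s. s \<in> B' \<and> (\<forall>n. G i n = rN n s)"
    using N_endomorphism[OF G_hom] by blast
  then obtain S where S_in: "\<And>i. S i \<in> B'" and S: "\<And>i n. G i n = rN n (S i)"
    by metis
  have "rM (tens a n) a' = rM (tens a n) (\<Sum>i<length vs. W i * S i)" for a n
  proof -
    have "rM (tens a n) a' = lM a (h n)"
      by (simp add: h_def lM_rM_commute lM_tens)
    also have "\<dots> = (\<Sum>i<length vs. rM (tens (a * vs ! i) n) (S i))"
      by (simp add: h_decomp S additive.sum[OF additive_lM] lM_tens rM_tens S_in)
    also have "\<dots> = rM (tens a n) (\<Sum>i<length vs. W i * S i)"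
      using W by (simp add: additive.sum[OF additive_rM_right] rM_mult acts_as_rmult_def)
    finally show ?thesis .
  qed
  then have "a' = (\<Sum>i<length vs. W i * S i)"
    by (rule right_action_eqI)
  with S_in show "\<exists>bs. length bs = length (map W [0..<length vs]) \<and> set bs \<subseteq> B' \<and>
      a' = (\<Sum>i<length (map W [0..<length vs]). map W [0..<length vs] ! i * bs ! i)"
    by (intro exI[of _ "map S [0..<length vs]"]) auto
qed

end

theorem proposition3p2:
  fixes B :: "'a::ring_1 set" and B' :: "'b::ring_1 set"
    and lM :: "'a \<Rightarrow> 'm::ab_group_add \<Rightarrow> 'm" and rM :: "'m \<Rightarrow> 'b \<Rightarrow> 'm"
    and lN :: "'a \<Rightarrow> 'n::ab_group_add \<Rightarrow> 'n" and rN :: "'n \<Rightarrow> 'b \<Rightarrow> 'n"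
  assumes "liberal_ext B"
    and "subring B'"
    and "morita_equivalent_via B B' lM rM lN rN"
  shows "liberal_ext B'"
proof -
  obtain vs where B: "subring B" and vs: "set vs \<subseteq> centralizer B" "right_generators B vs"
    using assms(1) by (auto simp: liberal_ext_iff)
  obtain Phi where "morita_tensor_repr Phi B B' lN rN lM rM"
    using B assms(3) morita_equivalent_via_tensor_repr by blast
  then interpret morita_tensor_repr Phi B B' lN rN lM rM .
  have "\<forall>i<length vs. \<exists>w. acts_as_rmult w (vs ! i)"
    using vs(1) centralizer_lift nth_mem by blast
  then obtain W where W: "\<And>i. i < length vs \<Longrightarrow> acts_as_rmult (W i) (vs ! i)"
    by metis
  have "set (map W [0..<length vs]) \<subseteq> centralizer B'"
    by (auto intro: acts_as_rmult_centralizer[OF W])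
  with assms(2) show ?thesis
    using lifts_right_generators[OF vs W] liberal_ext_iff by blast
qed

end
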